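(* Let $g,h:\mathbb{R}\to\mathbb{R}^2$ be free maps, i.e. $g'(t),g''(t)$ are linearly independent for all $t$, and likewise for $h$. Define $F_{gh}:\mathbb{R}^2\to\mathbb{R}^4$ by $F_{gh}(x,y)=(g(x),h(y))$. Then $F_{gh}\in\mathcal{A}_{2,4}$; moreover, for $F_{gh}$ the compatibility condition of the linearized system reduces to $\partial_x h_y+\partial_y h_x=\delta g_{xy}$. In particular $F(x,y)=(x,e^x,y,e^y)$ belongs to $\mathcal{A}_{2,4}$.
   Context: Definition of $\mathcal{A}_{m,q}$ for $q=\frac{m(m+3)}{2}-1$ (here $m=2,q=4$): it is the set of smooth $f:\mathbb{R}^m\to\mathbb{R}^q$ such that (i) at every point $x$ the $\frac{m(m+3)}{2}$ vectors $\partial_\alpha f(x)$, $\partial_{\alpha\beta}f(x)$ ($\alpha\le\beta$) span $\mathbb{R}^q$ (so one may choose smooth, nowhere simultaneously vanishing functions $\lambda^\alpha$, $\lambda^{\alpha\beta}=\lambda^{\beta\alpha}$ with $\sum_\alpha\lambda^\alpha\partial_\alpha f+\sum_{\alpha,\beta}\lambda^{\alpha\beta}\partial_{\alpha\beta}f\equiv0$, unique up to a nowhere-zero factor); and (ii) there is an index $\alpha_0$ such that at every point $\lambda^{\alpha_0 1},\dots,\lambda^{\alpha_0 m}$ are not all zero. The compatibility condition of the system $\sum_i \partial_\alpha f^i\delta f^i=h_\alpha$, $\sum_i \partial_{\alpha\beta} f^i\delta f^i=\tfrac12(\partial_\alpha h_\beta+\partial_\beta h_\alpha-\delta g_{\alpha\beta})$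 is $2\sum_\alpha\lambda^\alpha h_\alpha+\sum_{\alpha,\beta}\lambda^{\alpha\beta}(\partial_\alpha h_\beta+\partial_\beta h_\alpha-\delta g_{\alpha\beta})=0$. *)

theory Defs
  imports "HOL-Analysis.Analysis"
begin

definition pd :: "(real^'m \<Rightarrow> 'b::real_normed_vector) \<Rightarrow> 'm \<Rightarrow> real^'m \<Rightarrow> 'b" where
  "pd f \<alpha> x = frechet_derivative f (at x) (axis \<alpha> 1)"

definition pd2 :: "(real^'m \<Rightarrow> 'b::real_normed_vector) \<Rightarrow> 'm \<Rightarrow> 'm \<Rightarrow> real^'m \<Rightarrow> 'b" where
  "pd2 f \<alpha> \<beta> x = pd (pd f \<beta>) \<alpha> x"

fun Ck :: "nat \<Rightarrow> (real^'m \<Rightarrow> 'b::real_normed_vector) \<Rightarrow> bool" where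
  "Ck 0 f = continuous_on UNIV f"
| "Ck (Suc k) f = (f differentiable_on UNIV \<and> (\<forall>\<alpha>. Ck k (pd f \<alpha>)))"

definition smooth :: "(real^'m \<Rightarrow> 'b::real_normed_vector) \<Rightarrow> bool" where
  "smooth f = (\<forall>k. Ck k f)"

definition vd :: "(real \<Rightarrow> 'b::real_normed_vector) \<Rightarrow> real \<Rightarrow> 'b" where
  "vd g t = vector_derivative g (at t)"

fun Ck1 :: "nat \<Rightarrow> (real \<Rightarrow> 'b::real_normed_vector) \<Rightarrow> bool" where
  "Ck1 0 g = continuous_on UNIV g"
| "Ck1 (Suc k) g = (g differentiable_on UNIV \<and> Ck1 k (vd g))"

definition smooth1 :: "(real \<Rightarrow> 'b::real_normed_vector) \<Rightarrow> bool" where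
  "smooth1 g = (\<forall>k. Ck1 k g)"

definition free_curve :: "(real \<Rightarrow> real^2) \<Rightarrow> bool" where
  "free_curve g = (smooth1 g \<and>
     (\<forall>t. vd g t \<noteq> vd (vd g) t \<and> independent {vd g t, vd (vd g) t}))"

definition rel_at :: "(real^'m \<Rightarrow> real^'q) \<Rightarrow> real^'m \<Rightarrow> ('m \<Rightarrow> real) \<Rightarrow> ('m \<Rightarrow> 'm \<Rightarrow> real) \<Rightarrow> bool" where
  "rel_at f x lam1 lam2 =
     ((\<forall>\<alpha> \<beta>. lam2 \<alpha> \<beta> = lam2 \<beta> \<alpha>) \<and>
      \<not> ((\<forall>\<alpha>. lam1 \<alpha> = 0) \<and> (\<forall>\<alpha> \<beta>. lam2 \<alpha> \<beta> = 0)) \<and>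
      (\<Sum>\<alpha>\<in>UNIV. lam1 \<alpha> *\<^sub>R pd f \<alpha> x)
        + (\<Sum>\<alpha>\<in>UNIV. \<Sum>\<beta>\<in>UNIV. lam2 \<alpha> \<beta> *\<^sub>R pd2 f \<alpha> \<beta> x) = 0)"

text \<open>The class A_{m,q}, q = m(m+3)/2 - 1.  Since the relation is unique up to a
  nonzero factor, condition (ii) is stated for every nontrivial relation at each point.\<close>
definition A_class :: "(real^'m \<Rightarrow> real^'q) \<Rightarrow> bool" where
  "A_class f =
     (CARD('q) = CARD('m) * (CARD('m) + 3) div 2 - 1 \<and>
      smooth f \<and>
      (\<forall>x. span (range (\<lambda>\<alpha>. pd f \<alpha> x) \<union> {pd2 f \<alpha> \<beta> x | \<alpha> \<beta>. True}) = UNIV) \<and>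
      (\<exists>\<alpha>0. \<forall>x lam1 lam2. rel_at f x lam1 lam2 \<longrightarrow> (\<exists>\<beta>. lam2 \<alpha>0 \<beta> \<noteq> 0)))"

definition compat_expr :: "real^'m \<Rightarrow> ('m \<Rightarrow> real) \<Rightarrow> ('m \<Rightarrow> 'm \<Rightarrow> real)
     \<Rightarrow> (real^'m \<Rightarrow> real^'m) \<Rightarrow> (real^'m \<Rightarrow> real^'m^'m) \<Rightarrow> real" where
  "compat_expr x lam1 lam2 h dg =
     2 * (\<Sum>\<alpha>\<in>UNIV. lam1 \<alpha> * h x $ \<alpha>)
     + (\<Sum>\<alpha>\<in>UNIV. \<Sum>\<beta>\<in>UNIV. lam2 \<alpha> \<beta> *
          (pd (\<lambda>p. h p $ \<beta>) \<alpha> x + pd (\<lambda>p. h p $ \<alpha>) \<beta> x - dg x $ \<alpha> $ \<beta>))"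

definition F_gh :: "(real \<Rightarrow> real^2) \<Rightarrow> (real \<Rightarrow> real^2) \<Rightarrow> real^2 \<Rightarrow> real^4" where
  "F_gh g h p = vector [g (p$1) $ 1, g (p$1) $ 2, h (p$2) $ 1, h (p$2) $ 2]"

end

theory Submission
  imports Defs
begin

(* Write F_gh g h (x, y) = join (g x) (h y), where join places two vectors of R^2
   side by side in R^4.  Then d_x F = join g' 0, d_y F = join 0 h', d_xx F = join g'' 0,
   d_yy F = join 0 h'' and the mixed second partials vanish.
   (1) Planar linear algebra: two independent vectors u <> v have only the trivial vanishing
       combination and, in a 2-dimensional space, span it; a nonzero determinant gives
       independence.
   (2) Calculus of F_gh: its derivative, the partials above, and smoothness for smooth curves.
   (3) Since {g', g''} and {h', h''} are bases of R^2, the partials span R^4.  In a linear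
       relation the g-part and h-part vanish separately, so lam1 = 0 and lam2 is concentrated
       on the mixed entries lam2 1 2 = lam2 2 1, which is then nonzero.  This gives
       condition (ii) with alpha0 = 1 and reduces the compatibility expression to
       2 lam2 1 2 (d_x h_y + d_y h_x - dg_xy).
   (4) The curve t |-> (t, exp t) is free, and F(x, y) = (x, e^x, y, e^y) is F_gh of it twice. *)

lemma independent_pair_coeffs_zero:
  fixes u v :: "'a::real_vector"
  assumes "independent {u, v}" "u \<noteq> v" "a *\<^sub>R u + b *\<^sub>R v = 0"
  shows "a = 0 \<and> b = 0"
proof -
  have u_notin: "u \<notin> span {v}" and v_nonzero: "v \<noteq> 0"
    using assms(1,2) by (auto simp: independent_insert dest: dependent_zero)
  have "a = 0"
  proof (rule ccontr)
    assume "a \<noteq> 0"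
    have "a *\<^sub>R u = (- b) *\<^sub>R v"
      using assms(3) by (simp add: eq_neg_iff_add_eq_0)
    hence "u = (inverse a * - b) *\<^sub>R v"
      using \<open>a \<noteq> 0\<close> by (metis scaleR_scaleR scaleR_one left_inverse)
    moreover have "(inverse a * - b) *\<^sub>R v \<in> span {v}"
      by (intro span_scale span_base) simp
    ultimately show False using u_notin by simp
  qed
  with assms(3) v_nonzero show ?thesis by simp
qed

lemma independent_pair_span_UNIV:
  fixes u v :: "'a::euclidean_space"
  assumes "DIM('a) = 2" "independent {u, v}" "u \<noteq> v"
  shows "span {u, v} = UNIV"
  using card_eq_dim[of "{u, v}" UNIV] assms by auto

lemma independent_pair_if_det:
  fixes u v :: "real^2"
  assumes det: "u$1 * v$2 - u$2 * v$1 \<noteq> 0"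
  shows "u \<noteq> v \<and> independent {u, v}"
proof -
  have "v \<noteq> 0" using det by auto
  moreover have "u \<notin> span {v}"
  proof
    assume "u \<in> span {v}"
    then obtain c where "u = c *\<^sub>R v" by (auto simp: span_singleton)
    with det show False by simp
  qed
  ultimately show ?thesis
    using independent_insertI[of u "{v}"] span_base[of v "{v}"] by auto
qed

definition join :: "real^2 \<Rightarrow> real^2 \<Rightarrow> real^4" where
  "join u w = vector [u$1, u$2, w$1, w$2]"

lemma vector_4_nth [simp]:
  "(vector [a, b, c, d] :: 'a::zero^4) $ 1 = a"
  "(vector [a, b, c, d] :: 'a::zero^4) $ 2 = b"
  "(vector [a, b, c, d] :: 'a::zero^4) $ 3 = c"
  "(vector [a, b, c, d] :: 'a::zero^4) $ 4 = d"
  unfolding vector_def by simp_all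

lemma join_add: "join u w + join u' w' = join (u + u') (w + w')"
  and join_scaleR: "c *\<^sub>R join u w = join (c *\<^sub>R u) (c *\<^sub>R w)"
  and join_eq_0_iff: "join u w = 0 \<longleftrightarrow> u = 0 \<and> w = 0"
  and join_halves: "join (vector [z$1, z$2]) (vector [z$3, z$4]) = z"
  by (auto simp: join_def vec_eq_iff forall_2 forall_4)

lemma bounded_linear_join_left: "bounded_linear (\<lambda>u. join u 0)"
  and bounded_linear_join_right: "bounded_linear (\<lambda>w. join 0 w)"
  by (auto intro!: linearI simp: linear_conv_bounded_linear[symmetric] join_add join_scaleR)

lemma F_gh_join: "F_gh a b p = join (a (p$1)) (b (p$2))"
  by (simp add: F_gh_def join_def)

lemma span_join_UNIV:
  assumes "span A = UNIV" "span B = UNIV"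
  shows "span ((\<lambda>u. join u 0) ` A \<union> (\<lambda>w. join 0 w) ` B) = UNIV"
proof -
  let ?S = "(\<lambda>u. join u 0) ` A \<union> (\<lambda>w. join 0 w) ` B"
  have "join u 0 \<in> span ?S" for u
  proof -
    have "join u 0 \<in> span ((\<lambda>u. join u 0) ` A)"
      using span_linear_image[OF bounded_linear.linear[OF bounded_linear_join_left], of A]
        assms(1) by auto
    thus ?thesis by (rule span_mono[THEN subsetD, rotated]) blast
  qed
  moreover have "join 0 w \<in> span ?S" for w
  proof -
    have "join 0 w \<in> span ((\<lambda>w. join 0 w) ` B)"
      using span_linear_image[OF bounded_linear.linear[OF bounded_linear_join_right], of B]
        assms(2) by auto
    thus ?thesis by (rule span_mono[THEN subsetD, rotated]) blast
  qed
  ultimately have "join u 0 + join 0 w \<in> span ?S" for u w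
    by (intro span_add)
  hence "join u w \<in> span ?S" for u w
    by (simp add: join_add)
  thus ?thesis by (metis UNIV_eq_I join_halves)
qed

lemma curve_along_coordinate_has_derivative:
  fixes a :: "real \<Rightarrow> 'b::real_normed_vector"
  assumes "a differentiable_on UNIV"
  shows "((\<lambda>p::real^'m. a (p$i)) has_derivative (\<lambda>v. (v$i) *\<^sub>R vd a (p$i))) (at p)"
proof -
  have "(a has_derivative (\<lambda>s. s *\<^sub>R vd a (p$i))) (at (p$i))"
    using assms unfolding vd_def differentiable_on_def
    by (simp add: vector_derivative_works has_vector_derivative_def)
  from has_derivative_compose[OF bounded_linear_imp_has_derivative[OF bounded_linear_vec_nth] this]
  show ?thesis by (simp add: o_def)
qed

lemma F_gh_has_derivative:
  assumes "a differentiable_on UNIV" "b differentiable_on UNIV"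
  shows "(F_gh a b has_derivative
           (\<lambda>v. join ((v$1) *\<^sub>R vd a (p$1)) 0 + join 0 ((v$2) *\<^sub>R vd b (p$2)))) (at p)"
proof -
  have "F_gh a b = (\<lambda>p. join (a (p$1)) 0 + join 0 (b (p$2)))"
    by (simp add: fun_eq_iff F_gh_join join_add)
  thus ?thesis
    by (simp only:) (intro has_derivative_add
        bounded_linear.has_derivative[OF bounded_linear_join_left]
        bounded_linear.has_derivative[OF bounded_linear_join_right]
        curve_along_coordinate_has_derivative assms)
qed

(* The partials of F_gh are again of the form F_gh, which makes iteration possible. *)
lemma pd_F_gh:
  assumes "a differentiable_on UNIV" "b differentiable_on UNIV"
  shows pd_F_gh_1: "pd (F_gh a b) 1 = F_gh (vd a) (\<lambda>_. 0)"
    and pd_F_gh_2: "pd (F_gh a b) 2 = F_gh (\<lambda>_. 0) (vd b)"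
  by (auto simp: fun_eq_iff pd_def frechet_derivative_at[OF F_gh_has_derivative[OF assms], symmetric]
      F_gh_join join_add axis_def)

lemma vd_zero [simp]: "vd (\<lambda>_. 0) = (\<lambda>_. 0)"
  by (simp add: vd_def fun_eq_iff)

lemma smooth1_zero: "smooth1 (\<lambda>_. 0)"
proof -
  have "Ck1 k (\<lambda>_::real. 0::'a::real_normed_vector)" for k
    by (induction k) simp_all
  thus ?thesis by (simp add: smooth1_def)
qed

lemma smooth1_vd: "smooth1 a \<Longrightarrow> smooth1 (vd a)"
  and smooth1_differentiable_on: "smooth1 a \<Longrightarrow> a differentiable_on UNIV"
  unfolding smooth1_def by (metis Ck1.simps(2))+

lemma F_gh_differentiable_on:
  "a differentiable_on UNIV \<Longrightarrow> b differentiable_on UNIV \<Longrightarrow> F_gh a b differentiable_on UNIV"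
  using F_gh_has_derivative differentiable_def differentiable_at_imp_differentiable_on by blast

lemma smooth_F_gh:
  assumes "smooth1 a" "smooth1 b"
  shows "smooth (F_gh a b)"
proof -
  have "Ck k (F_gh a b)" if "smooth1 a" "smooth1 b" for k and a b :: "real \<Rightarrow> real^2"
    using that
  proof (induction k arbitrary: a b)
    case 0
    then show ?case
      by (simp add: F_gh_differentiable_on smooth1_differentiable_on differentiable_imp_continuous_on)
  next
    case (Suc k)
    have "Ck k (pd (F_gh a b) \<alpha>)" for \<alpha> :: 2
      using exhaust_2[of \<alpha>] Suc
      by (auto simp: pd_F_gh smooth1_differentiable_on smooth1_vd smooth1_zero)
    with Suc.prems show ?case
      by (simp add: F_gh_differentiable_on smooth1_differentiable_on)
  qed
  with assms show ?thesis by (simp add: smooth_def)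
qed

lemma F_gh_partials:
  assumes "smooth1 a" "smooth1 b"
  shows "pd (F_gh a b) 1 x = join (vd a (x$1)) 0"
    and "pd (F_gh a b) 2 x = join 0 (vd b (x$2))"
    and "pd2 (F_gh a b) 1 1 x = join (vd (vd a) (x$1)) 0"
    and "pd2 (F_gh a b) 2 2 x = join 0 (vd (vd b) (x$2))"
    and "pd2 (F_gh a b) 1 2 x = 0"
    and "pd2 (F_gh a b) 2 1 x = 0"
  using assms smooth1_zero[where 'a="real^2"]
  by (simp_all add: pd2_def pd_F_gh smooth1_differentiable_on smooth1_vd F_gh_join join_eq_0_iff)

lemma free_curve_pair:
  assumes "free_curve a"
  shows "vd a t \<noteq> vd (vd a) t" and "independent {vd a t, vd (vd a) t}"
  using assms by (simp_all add: free_curve_def)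

lemma span_partials_F_gh:
  assumes "free_curve a" "free_curve b"
  shows "span (range (\<lambda>\<alpha>. pd (F_gh a b) \<alpha> x) \<union> {pd2 (F_gh a b) \<alpha> \<beta> x | \<alpha> \<beta>. True}) = UNIV"
    (is "span ?S = UNIV")
proof -
  have smooth: "smooth1 a" "smooth1 b" using assms by (simp_all add: free_curve_def)
  let ?A = "{vd a (x$1), vd (vd a) (x$1)}" and ?B = "{vd b (x$2), vd (vd b) (x$2)}"
  have "span ?A = UNIV" "span ?B = UNIV"
    using assms by (simp_all add: independent_pair_span_UNIV free_curve_pair)
  hence "span ((\<lambda>u. join u 0) ` ?A \<union> (\<lambda>w. join 0 w) ` ?B) = UNIV"
    by (rule span_join_UNIV)
  moreover have "(\<lambda>u. join u 0) ` ?A \<union> (\<lambda>w. join 0 w) ` ?B \<subseteq> ?S"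
  proof -
    have "pd (F_gh a b) 1 x \<in> ?S" "pd (F_gh a b) 2 x \<in> ?S"
      "pd2 (F_gh a b) 1 1 x \<in> ?S" "pd2 (F_gh a b) 2 2 x \<in> ?S" by blast+
    thus ?thesis unfolding F_gh_partials[OF smooth] by auto
  qed
  ultimately show ?thesis
    using span_mono[of "(\<lambda>u. join u 0) ` ?A \<union> (\<lambda>w. join 0 w) ` ?B" ?S] by auto
qed

lemma relation_F_gh:
  assumes "free_curve a" "free_curve b" and rel: "rel_at (F_gh a b) x lam1 lam2"
  shows "lam1 1 = 0 \<and> lam1 2 = 0 \<and> lam2 1 1 = 0 \<and> lam2 2 2 = 0
         \<and> lam2 2 1 = lam2 1 2 \<and> lam2 1 2 \<noteq> 0"
proof -
  have smooth: "smooth1 a" "smooth1 b" using assms(1,2) by (simp_all add: free_curve_def)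
  have sym: "lam2 2 1 = lam2 1 2" using rel by (simp add: rel_at_def)
  have "join (lam1 1 *\<^sub>R vd a (x$1) + lam2 1 1 *\<^sub>R vd (vd a) (x$1))
             (lam1 2 *\<^sub>R vd b (x$2) + lam2 2 2 *\<^sub>R vd (vd b) (x$2)) = 0"
    using rel unfolding rel_at_def sum_2 F_gh_partials[OF smooth]
    by (simp add: join_add join_scaleR algebra_simps)
  hence "lam1 1 *\<^sub>R vd a (x$1) + lam2 1 1 *\<^sub>R vd (vd a) (x$1) = 0"
        "lam1 2 *\<^sub>R vd b (x$2) + lam2 2 2 *\<^sub>R vd (vd b) (x$2) = 0"
    by (simp_all add: join_eq_0_iff)
  hence diag: "lam1 1 = 0" "lam2 1 1 = 0" "lam1 2 = 0" "lam2 2 2 = 0"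
    using independent_pair_coeffs_zero free_curve_pair assms(1,2) by metis+
  have "lam2 1 2 \<noteq> 0"
  proof
    assume "lam2 1 2 = 0"
    hence "(\<forall>\<alpha>. lam1 \<alpha> = 0) \<and> (\<forall>\<alpha> \<beta>. lam2 \<alpha> \<beta> = 0)"
      using diag sym by (auto simp: forall_2)
    with rel show False by (simp add: rel_at_def)
  qed
  with diag sym show ?thesis by simp
qed

lemma compat_expr_off_diagonal:
  fixes dg :: "real^2 \<Rightarrow> real^2^2"
  assumes "lam1 1 = 0" "lam1 2 = 0" "lam2 1 1 = 0" "lam2 2 2 = 0"
    and "lam2 2 1 = lam2 1 2" "lam2 1 2 \<noteq> 0"
    and "dg x $ 2 $ 1 = dg x $ 1 $ 2"
  shows "compat_expr x lam1 lam2 k dg = 0 \<longleftrightarrow>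
           pd (\<lambda>p. k p $ 2) 1 x + pd (\<lambda>p. k p $ 1) 2 x = dg x $ 1 $ 2"
proof -
  have "compat_expr x lam1 lam2 k dg
          = 2 * lam2 1 2 * (pd (\<lambda>p. k p $ 2) 1 x + pd (\<lambda>p. k p $ 1) 2 x - dg x $ 1 $ 2)"
    using assms(1-5,7) by (simp add: compat_expr_def sum_2 algebra_simps)
  with assms(6) show ?thesis by simp
qed

theorem A_class_F_gh:
  assumes "free_curve a" "free_curve b"
  shows "A_class (F_gh a b)"
  unfolding A_class_def
proof (intro conjI allI)
  show "CARD(4) = CARD(2) * (CARD(2) + 3) div 2 - 1" by simp
  show "smooth (F_gh a b)"
    using assms by (simp add: smooth_F_gh free_curve_def)
  show "span (range (\<lambda>\<alpha>. pd (F_gh a b) \<alpha> x) \<union> {pd2 (F_gh a b) \<alpha> \<beta> x | \<alpha> \<beta>. True}) = UNIV" for x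
    using assms by (rule span_partials_F_gh)
  show "\<exists>\<alpha>0. \<forall>x lam1 lam2. rel_at (F_gh a b) x lam1 lam2 \<longrightarrow> (\<exists>\<beta>. lam2 \<alpha>0 \<beta> \<noteq> 0)"
    using relation_F_gh[OF assms] by blast
qed

(* The curves t |-> (c t + d, exp t), closed under differentiation; (t, exp t) is free. *)
definition lin_exp_curve :: "real \<Rightarrow> real \<Rightarrow> real \<Rightarrow> real^2" where
  "lin_exp_curve c d t = vector [c * t + d, exp t]"

lemma lin_exp_curve_has_vector_derivative:
  "(lin_exp_curve c d has_vector_derivative lin_exp_curve 0 c t) (at t)"
proof -
  have "lin_exp_curve c d = (\<lambda>t. (c * t + d) *\<^sub>R axis 1 1 + exp t *\<^sub>R axis 2 1)"
    by (auto simp: fun_eq_iff lin_exp_curve_def vec_eq_iff forall_2 axis_def)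
  moreover have "((\<lambda>t. (c * t + d) *\<^sub>R axis 1 1 + exp t *\<^sub>R axis 2 1) has_vector_derivative
                  lin_exp_curve 0 c t) (at t)"
    by (auto intro!: derivative_eq_intros simp: lin_exp_curve_def vec_eq_iff forall_2 axis_def)
  ultimately show ?thesis by simp
qed

lemma vd_lin_exp_curve: "vd (lin_exp_curve c d) = lin_exp_curve 0 c"
  using lin_exp_curve_has_vector_derivative
  by (auto simp: fun_eq_iff vd_def intro: vector_derivative_at)

lemma smooth1_lin_exp_curve: "smooth1 (lin_exp_curve c d)"
proof -
  have "lin_exp_curve c d differentiable_on UNIV" for c d
    using lin_exp_curve_has_vector_derivative
    by (metis differentiable_at_imp_differentiable_on has_vector_derivative_def differentiable_def)
  hence "Ck1 k (lin_exp_curve c d)" for k c d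
    by (induction k arbitrary: c d) (simp_all add: vd_lin_exp_curve differentiable_imp_continuous_on)
  thus ?thesis by (simp add: smooth1_def)
qed

lemma free_curve_lin_exp_curve: "free_curve (lin_exp_curve 1 0)"
proof -
  have "vd (lin_exp_curve 1 0) t \<noteq> vd (vd (lin_exp_curve 1 0)) t
        \<and> independent {vd (lin_exp_curve 1 0) t, vd (vd (lin_exp_curve 1 0)) t}" for t
    by (rule independent_pair_if_det) (simp add: vd_lin_exp_curve lin_exp_curve_def)
  thus ?thesis by (simp add: free_curve_def smooth1_lin_exp_curve)
qed

lemma exp_map_eq_F_gh:
  "(\<lambda>p :: real^2. vector [p$1, exp (p$1), p$2, exp (p$2)] :: real^4)
     = F_gh (lin_exp_curve 1 0) (lin_exp_curve 1 0)"
  by (simp add: fun_eq_iff F_gh_def lin_exp_curve_def)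

theorem mainTheorem2:
  fixes g h :: "real \<Rightarrow> real^2"
  assumes "free_curve g" and "free_curve h"
  shows "A_class (F_gh g h)
    \<and> (\<forall>x lam1 lam2 (k :: real^2 \<Rightarrow> real^2) (dg :: real^2 \<Rightarrow> real^2^2).
          rel_at (F_gh g h) x lam1 lam2
          \<longrightarrow> (\<forall>\<alpha>. (\<lambda>p. k p $ \<alpha>) differentiable (at x))
          \<longrightarrow> (\<forall>\<alpha> \<beta>. dg x $ \<alpha> $ \<beta> = dg x $ \<beta> $ \<alpha>)
          \<longrightarrow> (compat_expr x lam1 lam2 k dg = 0 \<longleftrightarrow>
               pd (\<lambda>p. k p $ 2) 1 x + pd (\<lambda>p. k p $ 1) 2 x = dg x $ 1 $ 2))
    \<and> A_class (\<lambda>p :: real^2. vector [p$1, exp (p$1), p$2, exp (p$2)] :: real^4)"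
proof (intro conjI allI impI)
  show "A_class (F_gh g h)"
    using assms by (rule A_class_F_gh)
  show "compat_expr x lam1 lam2 k dg = 0 \<longleftrightarrow>
          pd (\<lambda>p. k p $ 2) 1 x + pd (\<lambda>p. k p $ 1) 2 x = dg x $ 1 $ 2"
    if "rel_at (F_gh g h) x lam1 lam2" and "\<forall>\<alpha> \<beta>. dg x $ \<alpha> $ \<beta> = dg x $ \<beta> $ \<alpha>"
    for x lam1 lam2 k and dg :: "real^2 \<Rightarrow> real^2^2"
    using relation_F_gh[OF assms that(1)] that(2)
    by (intro compat_expr_off_diagonal) auto
  show "A_class (\<lambda>p :: real^2. vector [p$1, exp (p$1), p$2, exp (p$2)] :: real^4)"
    unfolding exp_map_eq_F_gh by (intro A_class_F_gh free_curve_lin_exp_curve)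
qed

end
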